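(* For every integer $N$, the polynomials $\phi_N(y,z)$ satisfy $$y\,\phi_{N+1}(y/q,z)\phi_N(y,z/q)-z\,\phi_{N+1}(y,z/q)\phi_N(y/q,z)=(y-z)\phi_{N+1}(y/q,z/q)\phi_N(y,z),$$ $$y\,\phi_{N+1}(y,z/q)\phi_N(y/q,z)-z\,\phi_{N+1}(y/q,z)\phi_N(y,z/q)=(y-z)\phi_{N+1}(y,z)\phi_N(y/q,z/q),$$ $$q^{-N-1}z\,\phi_{N+1}(y,z)\phi_N(y/q,z)+\phi_{N+1}(y/q,z)\phi_N(y,z)=(1+z)\phi_{N+1}(y/q,z/q)\phi_N(y,qz),$$ $$\phi_{N+1}(y/q,z)\phi_{N-1}(y,z)-\phi_{N+1}(y,z)\phi_{N-1}(y/q,z)=(1-q)\frac{y}{q}\,\phi_N(y/q,z)\phi_N(y,z),$$ $$\phi_{N+1}(y,z/q)\phi_{N-1}(y,z)-\phi_{N+1}(y,z)\phi_{N-1}(y,z/q)=(1-q)\frac{z}{q}\,\phi_N(y,z/q)\phi_N(y,z),$$ $$q^{2N}y\,\phi_N(y/q,z)\phi_N(y,z)+q^N(1+z)\phi_N(y,qz)\phi_N(y/q,z/q)=\frac{1-q^{2N+1}}{1-q}\,\phi_{N+1}(y,z)\phi_{N-1}(y/q,z).$$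
   Context: $q$ is a fixed nonzero complex constant that is not a root of unity; $y,z$ are variables. For $k\in\mathbb{Z}$ the polynomials $p_k(y,z)$ are defined by the generating function $\sum_{n\ge 0}p_n(y,z)t^n=\frac{(-(1-q)t;q)_\infty}{((1-q)yt;q)_\infty((1-q)zt;q)_\infty}$, with $(a;q)_\infty=\prod_{i\ge0}(1-aq^i)$, and $p_k=0$ for $k<0$; equivalently $p_n(y,z)=(1-q)^n\sum_{a+b+c=n}\frac{y^a z^b q^{c(c-1)/2}}{(q;q)_a(q;q)_b(q;q)_c}$ with $(q;q)_m=\prod_{j=1}^m(1-q^j)$. For $N>0$, $\phi_N(y,z)=\det\big(p_{N-2i+j+1}(y,z)\big)_{i,j=1}^N$; $\phi_0=1$; for $N<0$, $\phi_N=(-1)^{N(N+1)/2}\phi_{-N-1}$. *)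

theory Defs
  imports Complex_Main "Jordan_Normal_Form.Determinant"
begin

definition qpoch :: "complex \<Rightarrow> nat \<Rightarrow> complex" where
  "qpoch q m = (\<Prod>j=1..m. 1 - q ^ j)"

definition pp :: "complex \<Rightarrow> int \<Rightarrow> complex \<Rightarrow> complex \<Rightarrow> complex" where
  "pp q k y z = (if k < 0 then 0 else
     (1 - q) ^ nat k *
     (\<Sum>(a, b) \<in> {(a, b). a + b \<le> nat k}.
        let c = nat k - a - b in
        y ^ a * z ^ b * q ^ (c * (c - 1) div 2) / (qpoch q a * qpoch q b * qpoch q c)))"

text \<open>phi_n for n \<ge> 0: the n x n determinant det(p_{n-2i+j+1})_{i,j=1..n}
  (indices shifted to 0-based: entry (i,j) is p_{n-2(i+1)+(j+1)+1}); phi_0 = 1.\<close>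
definition phi_nat :: "complex \<Rightarrow> nat \<Rightarrow> complex \<Rightarrow> complex \<Rightarrow> complex" where
  "phi_nat q n y z = (if n = 0 then 1 else
     det (mat n n (\<lambda>(i, j). pp q (int n - 2 * (int i + 1) + (int j + 1) + 1) y z)))"

definition phi :: "complex \<Rightarrow> int \<Rightarrow> complex \<Rightarrow> complex \<Rightarrow> complex" where
  "phi q N y z = (if N \<ge> 0 then phi_nat q (nat N) y z
     else (-1) ^ nat (N * (N + 1) div 2) * phi_nat q (nat (- N - 1)) y z)"

end

theory Submission
  imports Defs "HOL-Computational_Algebra.Formal_Power_Series"
begin

(* phi_N is the Jacobi-Trudi determinant det(p_{N-2i+j}) of the staircase shape. Replacing the
   first row of such a determinant by (1, x, x^2, ...) and clearing it by column operations turns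
   the entry sequence g into the coefficients of (1 - x t) G(t); so the three-term Pluecker relation
   between determinants with two free rows yields bilinear relations between staircase
   determinants of g, of (1 - a t) G, (1 - b t) G and (1 - a t)(1 - b t) G. The generating function
   P(y,z;t) of the p_k satisfies (1 - (1-q) y t) P(y,z;t) = P(qy,z;t), likewise in z, and
   (1 + (1-q) t) P(y,z;qt) = P(qy,qz;t); the substitution t -> qt only multiplies a staircase
   determinant of size n by q^(n(n+1)/2). Choosing a, b, G accordingly gives all six identities for
   N >= 0, and phi_{-N-1} = +-phi_N transfers them to N < 0. *)

section \<open>Determinants of matrices given by row functions\<close>

definition det_rows :: "nat \<Rightarrow> (nat \<Rightarrow> nat \<Rightarrow> 'a::comm_ring_1) \<Rightarrow> 'a" where
  "det_rows n R = det (mat n n (\<lambda>(i, j). R i j))"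

definition cons_row :: "(nat \<Rightarrow> 'a) \<Rightarrow> (nat \<Rightarrow> nat \<Rightarrow> 'a) \<Rightarrow> nat \<Rightarrow> nat \<Rightarrow> 'a" where
  "cons_row u R i = (if i = 0 then u else R (i - 1))"

definition basis_row :: "nat \<Rightarrow> nat \<Rightarrow> 'a::zero_neq_one" where
  "basis_row c j = (if j = c then 1 else 0)"

lemma det_rows_cong:
  assumes "\<And>i j. i < n \<Longrightarrow> j < n \<Longrightarrow> R i j = R' i j"
  shows "det_rows n R = det_rows n R'"
  unfolding det_rows_def by (rule arg_cong[where f = det], rule cong_mat) (simp_all add: assms)

lemma mat_delete_rows:
  "mat_delete (mat n n (\<lambda>(i, j). R i j)) r c =
     mat (n - 1) (n - 1) (\<lambda>(i, j). R (if i < r then i else Suc i) (if j < c then j else Suc j))"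
  unfolding mat_delete_def by (rule cong_mat) auto

lemma det_rows_laplace_row:
  "k < n \<Longrightarrow> det_rows n R = (\<Sum>j<n. R k j * cofactor (mat n n (\<lambda>(i, j). R i j)) k j)"
  unfolding det_rows_def using laplace_expansion_row[of "mat n n (\<lambda>(i, j). R i j)" n k] by simp

lemma cofactor_rows_cong:
  assumes "\<And>i j. i < n \<Longrightarrow> j < n \<Longrightarrow> i \<noteq> k \<Longrightarrow> R i j = R' i j"
  shows "cofactor (mat n n (\<lambda>(i, j). R i j)) k c = cofactor (mat n n (\<lambda>(i, j). R' i j)) k c"
  unfolding cofactor_def mat_delete_rows
      by (rule arg_cong[where f = "\<lambda>A. _ * det A"], rule cong_mat) (auto intro!: assms)

lemma det_rows_linear_row:
  assumes k: "k < n"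
    and FG: "\<And>i j. i < n \<Longrightarrow> j < n \<Longrightarrow> i \<noteq> k \<Longrightarrow> F i j = G i j"
    and FH: "\<And>i j. i < n \<Longrightarrow> j < n \<Longrightarrow> i \<noteq> k \<Longrightarrow> F i j = H i j"
    and row: "\<And>j. j < n \<Longrightarrow> F k j = a * G k j + b * H k j"
  shows "det_rows n F = a * det_rows n G + b * det_rows n H"
proof -
  let ?c = "\<lambda>j. cofactor (mat n n (\<lambda>(i, j). F i j)) k j"
  have cG: "?c j = cofactor (mat n n (\<lambda>(i, j). G i j)) k j" for j
    by (rule cofactor_rows_cong) (simp add: FG)
  have cH: "?c j = cofactor (mat n n (\<lambda>(i, j). H i j)) k j" for j
    by (rule cofactor_rows_cong) (simp add: FH)
  have "det_rows n F = (\<Sum>j<n. a * (G k j * ?c j) + b * (H k j * ?c j))"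
    unfolding det_rows_laplace_row[OF k, of F] by (rule sum.cong) (auto simp: row algebra_simps)
  also have "\<dots> = a * det_rows n G + b * det_rows n H"
    by (simp add: det_rows_laplace_row[OF k, of G] det_rows_laplace_row[OF k, of H] sum.distrib
        sum_distrib_left cG[symmetric] cH[symmetric])
  finally show ?thesis .
qed

lemma det_rows_basis_row:
  assumes "r \<le> n" and "c \<le> n" and row: "\<And>j. j \<le> n \<Longrightarrow> R r j = basis_row c j"
  shows "det_rows (Suc n) R = (-1) ^ (r + c) *
    det_rows n (\<lambda>i j. R (if i < r then i else Suc i) (if j < c then j else Suc j))"
proof -
  have r: "r < Suc n" using assms by simp
  have "det_rows (Suc n) R = (\<Sum>j<Suc n. if j = c then cofactor (mat (Suc n) (Suc n)
      (\<lambda>(i, j). R i j)) r c else 0)"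
    unfolding det_rows_laplace_row[OF r] by (rule sum.cong) (auto simp: row basis_row_def)
  also have "\<dots> = cofactor (mat (Suc n) (Suc n) (\<lambda>(i, j). R i j)) r c"
    using \<open>c \<le> n\<close> by simp
  finally show ?thesis
    unfolding cofactor_def mat_delete_rows det_rows_def by simp
qed

lemma det_rows_identical_rows:
  assumes "a < n" "b < n" "a \<noteq> b" "\<And>j. j < n \<Longrightarrow> R a j = R b j"
  shows "det_rows n R = 0"
  unfolding det_rows_def by (rule det_identical_rows[of _ n a b]) (use assms in \<open>auto intro!: eq_vecI\<close>)

lemma det_rows_last_column_dependent:
  fixes R :: "nat \<Rightarrow> nat \<Rightarrow> 'a::idom"
  assumes "\<And>i. i < Suc n \<Longrightarrow> R i n = (\<Sum>j<n. R i j * c j)"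
  shows "det_rows (Suc n) R = 0"
proof -
  let ?A = "mat (Suc n) (Suc n) (\<lambda>(i, j). R i j)"
  define w where "w = vec (Suc n) (\<lambda>j. if j < n then c j else -1)"
  have "w \<noteq> 0\<^sub>v (Suc n)"
  proof
    assume "w = 0\<^sub>v (Suc n)"
    then have "w $ n = 0" by simp
    then show False by (simp add: w_def)
  qed
  moreover have "?A *\<^sub>v w = 0\<^sub>v (Suc n)"
  proof (rule eq_vecI)
    fix i assume "i < dim_vec (0\<^sub>v (Suc n) :: 'a vec)"
    then have i: "i < Suc n" by simp
    have "(?A *\<^sub>v w) $ i = (\<Sum>j<Suc n. R i j * w $ j)"
      using i by (simp add: scalar_prod_def lessThan_atLeast0 w_def)
    also have "\<dots> = (\<Sum>j<n. R i j * c j) - R i n"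
      by (simp add: w_def)
    finally show "(?A *\<^sub>v w) $ i = 0\<^sub>v (Suc n) $ i"
      using i assms by simp
  qed simp
  moreover have "w \<in> carrier_vec (Suc n)" "?A \<in> carrier_mat (Suc n) (Suc n)"
    by (simp_all add: w_def)
  ultimately show ?thesis
    unfolding det_rows_def using det_0_iff_vec_prod_zero[of ?A "Suc n"] by blast
qed

lemma det_rows_laplace_last_column:
  "det_rows (Suc n) R = (\<Sum>i<Suc n. R i n * ((-1) ^ (i + n)
      * det_rows n (\<lambda>a b. R (if a < i then a else Suc a) b)))"
proof -
  let ?M = "mat (Suc n) (Suc n) (\<lambda>(i, j). R i j)"
  have "det_rows (Suc n) R = (\<Sum>i<Suc n. ?M $$ (i, n) * cofactor ?M i n)"
    unfolding det_rows_def by (rule laplace_expansion_column) auto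
  also have "\<dots> = (\<Sum>i<Suc n. R i n * ((-1) ^ (i + n) * det_rows n (\<lambda>a b. R (if a < i then a else Suc a) b)))"
  proof (rule sum.cong)
    fix i assume "i \<in> {..<Suc n}"
    moreover have "det_rows n (\<lambda>a b. R (if a < i then a else Suc a) (if b < n then b else Suc b))
        = det_rows n (\<lambda>a b. R (if a < i then a else Suc a) b)"
      by (rule det_rows_cong) simp
    ultimately show "?M $$ (i, n) * cofactor ?M i n
        = R i n * ((-1) ^ (i + n) * det_rows n (\<lambda>a b. R (if a < i then a else Suc a) b))"
      by (simp add: cofactor_def mat_delete_rows det_rows_def)
  qed simp
  finally show ?thesis .
qed

lemma det_rows_subtract_previous_column:
  "det_rows n (\<lambda>i j. if j = 0 then R i 0 else R i j - x * R i (j - 1)) = det_rows n R"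
proof -
  define A where "A = mat n n (\<lambda>(i, j). R i j)"
  define U where "U = mat n n (\<lambda>(i, j). if i = j then 1 else if Suc i = j then - x else 0)"
  have A: "A \<in> carrier_mat n n" and U: "U \<in> carrier_mat n n"
    unfolding A_def U_def by auto
  have "det U = prod_list (diag_mat U)"
    by (rule det_upper_triangular[OF _ U]) (auto simp: upper_triangular_def U_def)
  also have "diag_mat U = map (\<lambda>i. 1) [0..<n]"
    unfolding diag_mat_def U_def by auto
  also have "prod_list (map (\<lambda>i. 1) [0..<n]) = 1"
    by (induct n) auto
  finally have det_U: "det U = 1" .
  have AU: "A * U = mat n n (\<lambda>(i, j). if j = 0 then R i 0 else R i j - x * R i (j - 1))"
  proof (rule eq_matI)
    fix i j assume "i < dim_row (mat n n (\<lambda>(i, j). if j = 0 then R i 0 else R i j - x * R i (j - 1)))"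
      and "j < dim_col (mat n n (\<lambda>(i, j). if j = 0 then R i 0 else R i j - x * R i (j - 1)))"
    then have i: "i < n" and j: "j < n" by auto
    have "(A * U) $$ (i, j) = row A i \<bullet> col U j"
      using i j A U by simp
    also have "\<dots> = (\<Sum>k \<in> {0..<dim_vec (col U j)}. row A i $ k * col U j $ k)"
      by (simp only: scalar_prod_def)
    also have "\<dots> = (\<Sum>k \<in> {0..<n}. R i k * U $$ (k, j))"
      using i j A U by (intro sum.cong) (auto simp: A_def)
    also have "\<dots> = (\<Sum>k \<in> {0..<n}. (if k = j then R i k else 0) +
        (if j \<noteq> 0 \<and> k = j - 1 then - x * R i k else 0))"
      by (rule sum.cong) (use j in \<open>auto simp: U_def\<close>)
    also have "\<dots> = (if j = 0 then R i 0 else R i j - x * R i (j - 1))"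
      unfolding sum.distrib using j by auto
    finally show "(A * U) $$ (i, j) = mat n n (\<lambda>(i, j). if j = 0 then R i 0 else R i j - x * R i (j - 1))
        $$ (i, j)"
      using i j by simp
  qed (use A U in auto)
  have "det_rows n R = det (A * U)"
    using det_mult[OF A U] det_U by (simp add: A_def det_rows_def)
  also have "\<dots> = det_rows n (\<lambda>i j. if j = 0 then R i 0 else R i j - x * R i (j - 1))"
    by (simp add: AU det_rows_def)
  finally show ?thesis ..
qed

lemma det_rows_border:
  "det_rows (Suc n) (cons_row (\<lambda>j. x ^ j) C) = det_rows n (\<lambda>i j. C i (Suc j) - x * C i j)"
proof -
  let ?R = "cons_row (\<lambda>j. x ^ j) C"
  define G where "G = (\<lambda>i j. if j = 0 then ?R i 0 else ?R i j - x * ?R i (j - 1))"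
  have "det_rows (Suc n) ?R = det_rows (Suc n) G"
    unfolding G_def by (rule det_rows_subtract_previous_column[symmetric])
  also have "\<dots> = (-1) ^ (0 + 0) * det_rows n
      (\<lambda>i j. G (if i < 0 then i else Suc i) (if j < 0 then j else Suc j))"
    by (rule det_rows_basis_row) (auto simp: G_def cons_row_def basis_row_def power_eq_if)
  also have "\<dots> = det_rows n (\<lambda>i j. C i (Suc j) - x * C i j)"
    by (simp, rule det_rows_cong) (auto simp: G_def cons_row_def)
  finally show ?thesis .
qed

lemma det_rows_scale:
  fixes r c :: "nat \<Rightarrow> 'a::comm_ring_1"
  shows "det_rows n (\<lambda>i j. r i * B i j * c j) = (\<Prod>i<n. r i) * (\<Prod>j<n. c j) * det_rows n B"
proof -
  have e1: "mat n n (\<lambda>(i, j). r i * B i j * c j) = mat\<^sub>r n n (\<lambda>i. r i \<cdot>\<^sub>v vec n (\<lambda>j. B i j * c j))"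
    by (rule eq_matI) auto
  have e2: "mat\<^sub>r n n (\<lambda>i. vec n (\<lambda>j. B i j * c j)) = transpose_mat (mat n n (\<lambda>(i, j). c i * B j i))"
    by (rule eq_matI) auto
  have e3: "mat n n (\<lambda>(i, j). c i * B j i) = mat\<^sub>r n n (\<lambda>i. c i \<cdot>\<^sub>v vec n (\<lambda>j. B j i))"
    by (rule eq_matI) auto
  have e4: "mat\<^sub>r n n (\<lambda>i. vec n (\<lambda>j. B j i)) = transpose_mat (mat n n (\<lambda>(i, j). B i j))"
    by (rule eq_matI) auto
  have "det_rows n (\<lambda>i j. r i * B i j * c j) = prod r {0..<n} * det (mat\<^sub>r n n (\<lambda>i. vec n (\<lambda>j. B i j * c j)))"
    unfolding det_rows_def e1 by (rule det_rows_mul) auto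
  also have "det (mat\<^sub>r n n (\<lambda>i. vec n (\<lambda>j. B i j * c j))) = det (mat n n (\<lambda>(i, j). c i * B j i))"
    unfolding e2 by (rule det_transpose) auto
  also have "\<dots> = prod c {0..<n} * det (mat\<^sub>r n n (\<lambda>i. vec n (\<lambda>j. B j i)))"
    unfolding e3 by (rule det_rows_mul) auto
  also have "det (mat\<^sub>r n n (\<lambda>i. vec n (\<lambda>j. B j i))) = det_rows n B"
    unfolding e4 det_rows_def by (rule det_transpose) auto
  finally show ?thesis by (simp add: lessThan_atLeast0 algebra_simps)
qed

section \<open>Determinants with two free rows and the Pluecker relation\<close>

definition two_row_det :: "nat \<Rightarrow> (nat \<Rightarrow> nat \<Rightarrow> 'a::comm_ring_1) \<Rightarrow> (nat \<Rightarrow> 'a) \<Rightarrow> (nat \<Rightarrow> 'a) \<Rightarrow> 'a" where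
  "two_row_det k L u v = det_rows (Suc (Suc k)) (cons_row u (cons_row v L))"

lemma two_row_det_swap: "two_row_det k L u v = - two_row_det k L v u"
proof -
  let ?A = "mat (Suc (Suc k)) (Suc (Suc k)) (\<lambda>(i, j). cons_row v (cons_row u L) i j)"
  have "swaprows 0 1 ?A = mat (Suc (Suc k)) (Suc (Suc k)) (\<lambda>(i, j). cons_row u (cons_row v L) i j)"
    unfolding mat_swaprows_def by (rule eq_matI) (auto simp: cons_row_def)
  moreover have "det (swaprows 0 1 ?A) = - det ?A"
    by (rule det_swaprows[of 0 "Suc (Suc k)" 1]) auto
  ultimately show ?thesis
    unfolding two_row_det_def det_rows_def by simp
qed

lemma two_row_det_frame_row: "r < k \<Longrightarrow> two_row_det k L (L r) v = 0"
  unfolding two_row_det_def by (rule det_rows_identical_rows[of 0 _ "r + 2"]) (auto simp: cons_row_def)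

lemma two_row_det_linear_form:
  obtains c where "\<And>u. two_row_det k L u w = (\<Sum>j<Suc (Suc k). u j * c j)"
proof -
  define c where "c j
      = cofactor (mat (Suc (Suc k)) (Suc (Suc k)) (\<lambda>(i, j). cons_row (\<lambda>_. 0) (cons_row w L) i j)) 0 j" for j
  have "two_row_det k L u w = (\<Sum>j<Suc (Suc k). u j * c j)" for u
  proof -
    have cof: "cofactor (mat (Suc (Suc k)) (Suc (Suc k)) (\<lambda>(i, j). cons_row u (cons_row w L) i j)) 0 j
        = c j" for j
      unfolding c_def by (rule cofactor_rows_cong) (simp add: cons_row_def)
    show ?thesis
      unfolding two_row_det_def det_rows_laplace_row[OF zero_less_Suc] cof by (simp add: cons_row_def)
  qed
  then show thesis by (rule that)
qed

lemma two_row_det_pluecker: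
  fixes L :: "nat \<Rightarrow> nat \<Rightarrow> 'a::idom"
  shows "two_row_det k L u1 u2 * two_row_det k L u3 u4 - two_row_det k L u1 u3 * two_row_det k L u2 u4
    + two_row_det k L u1 u4 * two_row_det k L u2 u3 = 0"
proof -
  let ?P = "two_row_det k L"
  let ?k2 = "Suc (Suc k)"
  obtain c where c: "\<And>u. ?P u u4 = (\<Sum>j<?k2. u j * c j)"
    using two_row_det_linear_form[of k L u4] by blast
  \<comment> \<open>the rows u3, u1, u2, L 0, ..., L (k - 1), extended by their values under ?P _ u4; the
    last column is then a combination of the others\<close>
  define W where "W = cons_row u3 (cons_row u1 (cons_row u2 L))"
  define N where "N i j = (if j < ?k2 then W i j else ?P (W i) u4)" for i j
  let ?t = "\<lambda>i. N i ?k2 * ((-1) ^ (i + ?k2) * det_rows ?k2 (\<lambda>a b. N (if a < i then a else Suc a) b))"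
  have minor0: "det_rows ?k2 (\<lambda>a b. N (if a < 0 then a else Suc a) b) = ?P u1 u2"
    unfolding two_row_det_def by (rule det_rows_cong) (simp add: N_def W_def cons_row_def)
  have minor1: "det_rows ?k2 (\<lambda>a b. N (if a < 1 then a else Suc a) b) = ?P u3 u2"
    unfolding two_row_det_def by (rule det_rows_cong) (simp add: N_def W_def cons_row_def)
  have minor2: "det_rows ?k2 (\<lambda>a b. N (if a < 2 then a else Suc a) b) = ?P u3 u1"
    unfolding two_row_det_def by (rule det_rows_cong) (simp add: N_def W_def cons_row_def)
  have "0 = det_rows (Suc ?k2) N"
    by (rule det_rows_last_column_dependent[symmetric]) (simp add: N_def c)
  also have "\<dots> = (\<Sum>i<Suc ?k2. ?t i)"
    by (rule det_rows_laplace_last_column)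
  also have "\<dots> = ?t 0 + (?t 1 + (?t 2 + (\<Sum>i<k. ?t (i + 3))))"
    by (simp only: sum.lessThan_Suc_shift) (simp add: numeral_eq_Suc)
  also have "(\<Sum>i<k. ?t (i + 3)) = 0"
    by (rule sum.neutral) (auto simp: N_def W_def cons_row_def two_row_det_frame_row)
  finally have "0 = ?P u3 u4 * ((-1) ^ ?k2 * ?P u1 u2) + (?P u1 u4 * ((-1) ^ (1 + ?k2) * ?P u3 u2)
      + ?P u2 u4 * ((-1) ^ (2 + ?k2) * ?P u3 u1))"
    unfolding minor0 minor1 minor2 by (simp add: N_def W_def cons_row_def)
  then have "(-1) ^ k * (?P u1 u2 * ?P u3 u4 - ?P u1 u3 * ?P u2 u4 + ?P u1 u4 * ?P u2 u3) = 0"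
    using two_row_det_swap[of k L u3 u2] two_row_det_swap[of k L u3 u1] by (simp add: algebra_simps)
  then show ?thesis by simp
qed

lemma two_row_det_basis_rows:
  fixes L :: "nat \<Rightarrow> nat \<Rightarrow> 'a::comm_ring_1"
  assumes cd: "c \<in> {Suc k, Suc (Suc k)}" "d \<in> {Suc k, Suc (Suc k)}" "c \<noteq> d" and "L k = basis_row c"
  shows "two_row_det (Suc k) L u (basis_row d) = (-1) ^ c * det_rows (Suc k) (cons_row u L)"
proof -
  let ?R = "cons_row u (cons_row (basis_row d) L)"
  let ?R' = "\<lambda>i j. ?R (if i < Suc (Suc k) then i else Suc i) (if j < c then j else Suc j)"
  have "two_row_det (Suc k) L u (basis_row d) = (-1) ^ (Suc (Suc k) + c) * det_rows (Suc (Suc k)) ?R'"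
    unfolding two_row_det_def by (rule det_rows_basis_row) (use assms in \<open>auto simp: cons_row_def\<close>)
  also have "det_rows (Suc (Suc k)) ?R' = (-1) ^ (1 + Suc k) *
      det_rows (Suc k) (\<lambda>i j. ?R' (if i < 1 then i else Suc i) (if j < Suc k then j else Suc j))"
    by (rule det_rows_basis_row) (use cd in \<open>auto simp: cons_row_def basis_row_def\<close>)
  also have "det_rows (Suc k) (\<lambda>i j. ?R' (if i < 1 then i else Suc i) (if j < Suc k then j else Suc j))
      = det_rows (Suc k) (cons_row u L)"
  proof (rule det_rows_cong)
    fix i j assume "i < Suc k" "j < Suc k"
    with cd show "?R' (if i < 1 then i else Suc i) (if j < Suc k then j else Suc j) = cons_row u L i j"
      by (cases i) (auto simp: cons_row_def)
  qed
  also have "(-1) ^ (Suc (Suc k) + c) * ((-1) ^ (1 + Suc k) * det_rows (Suc k) (cons_row u L))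
      = (-1) ^ c * det_rows (Suc k) (cons_row u L)"
  proof -
    have "(-1::'a) ^ (Suc (Suc k) + c) * (-1) ^ (1 + Suc k) = (-1) ^ (c + 2 * (k + 2))"
      unfolding power_add[symmetric] by (rule arg_cong[where f = "power (-1)"]) simp
    also have "\<dots> = (-1) ^ c"
      by (simp add: power_add power_mult)
    finally have sign: "(-1::'a) ^ (Suc (Suc k) + c) * (-1) ^ (1 + Suc k) = (-1) ^ c" .
    show ?thesis
      by (simp only: mult.assoc[symmetric] sign)
  qed
  finally show ?thesis .
qed

lemma two_row_det_pluecker_basis_frame:
  fixes L :: "nat \<Rightarrow> nat \<Rightarrow> 'a::idom"
  assumes last_row: "\<And>j. j < Suc (Suc (Suc k)) \<Longrightarrow>
    L k j = a * basis_row (Suc k) j + b * basis_row (Suc (Suc k)) j"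
  defines "B u \<equiv> det_rows (Suc k) (cons_row u L)"
  shows "two_row_det (Suc k) L u1 u2 * B u3 - two_row_det (Suc k) L u1 u3 * B u2
    + B u1 * two_row_det (Suc k) L u2 u3 = 0"
proof -
  have rel: "two_row_det (Suc k) (L(k := basis_row c)) u1 u2 * B u3
      - two_row_det (Suc k) (L(k := basis_row c)) u1 u3 * B u2
      + B u1 * two_row_det (Suc k) (L(k := basis_row c)) u2 u3 = 0"
    if c: "c \<in> {Suc k, Suc (Suc k)}" for c
  proof -
    let ?P = "two_row_det (Suc k) (L(k := basis_row c))"
    define d where "d = (if c = Suc k then Suc (Suc k) else Suc k)"
    have "det_rows (Suc k) (cons_row u (L(k := basis_row c))) = B u" for u
      unfolding B_def by (rule det_rows_cong) (auto simp: cons_row_def)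
    then have e: "?P u (basis_row d) = (-1) ^ c * B u" for u
      using c by (subst two_row_det_basis_rows[where c = c and d = d]) (auto simp: d_def)
    have "?P u1 u2 * ?P u3 (basis_row d) - ?P u1 u3 * ?P u2 (basis_row d)
        + ?P u1 (basis_row d) * ?P u2 u3 = 0"
      by (rule two_row_det_pluecker)
    then have "(-1) ^ c * (?P u1 u2 * B u3 - ?P u1 u3 * B u2 + B u1 * ?P u2 u3) = 0"
      unfolding e by (simp add: algebra_simps)
    then show ?thesis by simp
  qed
  have split: "two_row_det (Suc k) L u v = a * two_row_det (Suc k) (L(k := basis_row (Suc k))) u v
      + b * two_row_det (Suc k) (L(k := basis_row (Suc (Suc k)))) u v" for u v
    unfolding two_row_det_def
    by (rule det_rows_linear_row[of "Suc (Suc k)"]) (auto simp: cons_row_def last_row)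
  let ?P1 = "two_row_det (Suc k) (L(k := basis_row (Suc k)))"
  let ?P2 = "two_row_det (Suc k) (L(k := basis_row (Suc (Suc k))))"
  have "two_row_det (Suc k) L u1 u2 * B u3 - two_row_det (Suc k) L u1 u3 * B u2
      + B u1 * two_row_det (Suc k) L u2 u3
    = a * (?P1 u1 u2 * B u3 - ?P1 u1 u3 * B u2 + B u1 * ?P1 u2 u3)
      + b * (?P2 u1 u2 * B u3 - ?P2 u1 u3 * B u2 + B u1 * ?P2 u2 u3)"
    unfolding split by (simp add: algebra_simps)
  then show ?thesis
    using rel[of "Suc k"] rel[of "Suc (Suc k)"] by simp
qed

section \<open>Staircase determinants\<close>

definition staircase_det :: "nat \<Rightarrow> (int \<Rightarrow> 'a::comm_ring_1) \<Rightarrow> 'a" where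
  "staircase_det n g = det_rows n (\<lambda>i j. g (int n - 2 * int i + int j))"

text \<open>Row 0 and rows 1, 2, ... of the staircase matrix of size n, continued to the right.\<close>

definition staircase_top :: "nat \<Rightarrow> (int \<Rightarrow> 'a) \<Rightarrow> nat \<Rightarrow> 'a" where
  "staircase_top n g j = g (int n + int j)"

definition staircase_frame :: "nat \<Rightarrow> (int \<Rightarrow> 'a) \<Rightarrow> nat \<Rightarrow> nat \<Rightarrow> 'a" where
  "staircase_frame n g i j = g (int n - 2 - 2 * int i + int j)"

definition powers :: "'a::monoid_mult \<Rightarrow> nat \<Rightarrow> 'a" where
  "powers x = (\<lambda>j. x ^ j)"

text \<open>If g lists the coefficients of G(t), then mult_lin c g lists those of (1 - c t) G(t).\<close>

definition mult_lin :: "'a::comm_ring_1 \<Rightarrow> (int \<Rightarrow> 'a) \<Rightarrow> int \<Rightarrow> 'a" where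
  "mult_lin c g k = g k - c * g (k - 1)"

lemma mult_lin_0 [simp]: "mult_lin 0 g = g"
  by (rule ext) (simp add: mult_lin_def)

lemma mult_lin_commute: "mult_lin a (mult_lin b g) = mult_lin b (mult_lin a g)"
  by (rule ext) (simp add: mult_lin_def algebra_simps)

lemma staircase_det_eq_frame:
  "staircase_det n g = det_rows n (cons_row (staircase_top n g) (staircase_frame n g))"
  unfolding staircase_det_def
  by (rule det_rows_cong) (auto simp: cons_row_def staircase_top_def staircase_frame_def algebra_simps)

lemma staircase_det_mult_lin:
  "staircase_det n (mult_lin x g) = det_rows (Suc n) (cons_row (powers x) (staircase_frame (Suc n) g))"
  unfolding powers_def det_rows_border staircase_det_def
  by (rule det_rows_cong) (simp add: staircase_frame_def mult_lin_def algebra_simps)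

lemma two_row_det_powers:
  "two_row_det n (staircase_frame n g) (powers y) (powers x)
      = (x - y) * staircase_det n (mult_lin x (mult_lin y g))"
proof -
  let ?C = "cons_row (powers x) (staircase_frame n g)"
  let ?D = "cons_row (powers x) (staircase_frame (Suc n) (mult_lin y g))"
  have "two_row_det n (staircase_frame n g) (powers y) (powers x)
      = det_rows (Suc n) (\<lambda>i j. ?C i (Suc j) - y * ?C i j)"
    unfolding two_row_det_def by (simp only: powers_def[of y] det_rows_border)
  also have "\<dots> = (x - y) * det_rows (Suc n) ?D + 0 * det_rows (Suc n) ?D"
    by (rule det_rows_linear_row[of 0])
      (auto simp: cons_row_def powers_def staircase_frame_def mult_lin_def algebra_simps)
  also have "\<dots> = (x - y) * staircase_det n (mult_lin x (mult_lin y g))"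
    by (simp add: staircase_det_mult_lin)
  finally show ?thesis .
qed

lemma cons_row_staircase_top:
  "cons_row (staircase_top n g) (staircase_frame n g) = staircase_frame (Suc (Suc n)) g"
  by (auto simp: fun_eq_iff cons_row_def staircase_top_def staircase_frame_def of_nat_diff algebra_simps)

lemma two_row_det_powers_top:
  "two_row_det n (staircase_frame n g) (powers y) (staircase_top n g) = staircase_det (Suc n) (mult_lin y g)"
  unfolding two_row_det_def cons_row_staircase_top staircase_det_mult_lin ..

lemma staircase_frame_last_row:
  fixes g :: "int \<Rightarrow> 'a::comm_ring_1"
  assumes "\<And>k. k < 0 \<Longrightarrow> g k = 0" and "j < Suc (Suc (Suc n))"
  shows "staircase_frame (Suc n) g n j = g 0 * basis_row (Suc n) j + g 1 * basis_row (Suc (Suc n)) j"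
proof -
  have "j \<le> n \<or> j = Suc n \<or> j = Suc (Suc n)"
    using assms(2) by auto
  then show ?thesis
    by (auto simp: staircase_frame_def basis_row_def assms(1))
qed

lemma staircase_det_relation_1:
  fixes g :: "int \<Rightarrow> 'a::idom"
  shows "a * staircase_det (Suc n) (mult_lin b g) * staircase_det n (mult_lin a g)
      - b * staircase_det (Suc n) (mult_lin a g) * staircase_det n (mult_lin b g)
    = (a - b) * staircase_det (Suc n) g * staircase_det n (mult_lin a (mult_lin b g))"
proof -
  let ?P = "two_row_det n (staircase_frame n g)"
  let ?T = "staircase_top n g"
  have "?P (powers 0) ?T * ?P (powers a) (powers b) - ?P (powers 0) (powers a) * ?P ?T (powers b)
      + ?P (powers 0) (powers b) * ?P ?T (powers a) = 0"
    by (rule two_row_det_pluecker)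
  then have "staircase_det (Suc n) g * ((b - a) * staircase_det n (mult_lin a (mult_lin b g)))
      - a * staircase_det n (mult_lin a g) * - staircase_det (Suc n) (mult_lin b g)
      + b * staircase_det n (mult_lin b g) * - staircase_det (Suc n) (mult_lin a g) = 0"
    by (simp only: two_row_det_powers two_row_det_powers_top two_row_det_swap[of n _ ?T]
        mult_lin_0 diff_zero mult_lin_commute[of b a])
  then show ?thesis
    by (simp add: algebra_simps)
qed

lemma staircase_det_relation_2:
  fixes g :: "int \<Rightarrow> 'a::idom"
  assumes "\<And>k. k < 0 \<Longrightarrow> g k = 0"
  shows "a * staircase_det (Suc n) (mult_lin a g) * staircase_det n (mult_lin b g)
      - b * staircase_det (Suc n) (mult_lin b g) * staircase_det n (mult_lin a g)
    = (a - b) * staircase_det (Suc n) (mult_lin a (mult_lin b g)) * staircase_det n g"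
proof -
  let ?P = "two_row_det (Suc n) (staircase_frame (Suc n) g)"
  let ?B = "\<lambda>u. det_rows (Suc n) (cons_row u (staircase_frame (Suc n) g))"
  have "?P (powers 0) (powers a) * ?B (powers b) - ?P (powers 0) (powers b) * ?B (powers a)
      + ?B (powers 0) * ?P (powers a) (powers b) = 0"
    by (rule two_row_det_pluecker_basis_frame) (rule staircase_frame_last_row[OF assms])
  then have "a * staircase_det (Suc n) (mult_lin a g) * staircase_det n (mult_lin b g)
      - b * staircase_det (Suc n) (mult_lin b g) * staircase_det n (mult_lin a g)
      + staircase_det n g * ((b - a) * staircase_det (Suc n) (mult_lin a (mult_lin b g))) = 0"
    by (simp only: two_row_det_powers staircase_det_mult_lin[symmetric] mult_lin_0 diff_zero
        mult_lin_commute[of b a])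
  then show ?thesis
    by (simp add: algebra_simps)
qed

lemma staircase_det_relation_3:
  fixes g :: "int \<Rightarrow> 'a::idom"
  assumes "\<And>k. k < 0 \<Longrightarrow> g k = 0"
  shows "staircase_det (Suc (Suc n)) (mult_lin b g) * staircase_det n (mult_lin a g)
      - staircase_det (Suc (Suc n)) (mult_lin a g) * staircase_det n (mult_lin b g)
    = (a - b) * staircase_det (Suc n) (mult_lin a (mult_lin b g)) * staircase_det (Suc n) g"
proof -
  let ?P = "two_row_det (Suc n) (staircase_frame (Suc n) g)"
  let ?B = "\<lambda>u. det_rows (Suc n) (cons_row u (staircase_frame (Suc n) g))"
  let ?T = "staircase_top (Suc n) g"
  have "?P (powers b) ?T * ?B (powers a) - ?P (powers b) (powers a) * ?B ?T
      + ?B (powers b) * ?P ?T (powers a) = 0"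
    by (rule two_row_det_pluecker_basis_frame) (rule staircase_frame_last_row[OF assms])
  then have "staircase_det (Suc (Suc n)) (mult_lin b g) * staircase_det n (mult_lin a g)
      - (a - b) * staircase_det (Suc n) (mult_lin a (mult_lin b g)) * staircase_det (Suc n) g
      + staircase_det n (mult_lin b g) * - staircase_det (Suc (Suc n)) (mult_lin a g) = 0"
    by (simp only: two_row_det_powers two_row_det_powers_top two_row_det_swap[of "Suc n" _ ?T]
        staircase_det_mult_lin[symmetric] staircase_det_eq_frame[symmetric])
  then show ?thesis
    by (simp add: algebra_simps)
qed

text \<open>If g lists the coefficients of G(t), then dilate q g lists those of G(q t).\<close>

definition dilate :: "'a::field \<Rightarrow> (int \<Rightarrow> 'a) \<Rightarrow> int \<Rightarrow> 'a" where
  "dilate q g k = q powi k * g k"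

lemma mult_lin_dilate:
  assumes "q \<noteq> 0"
  shows "mult_lin (q * c) (dilate q g) = dilate q (mult_lin c g)"
  using assms by (intro ext) (simp add: mult_lin_def dilate_def algebra_simps power_int_diff)

lemma staircase_det_dilate:
  fixes q :: "'a::field"
  assumes q: "q \<noteq> 0"
  shows "staircase_det n (dilate q g) = (\<Prod>i<n. q ^ Suc i) * staircase_det n g"
proof -
  have "staircase_det n (dilate q g) =
      det_rows n (\<lambda>i j. q powi (int n - 2 * int i) * g (int n - 2 * int i + int j) * q powi int j)"
    unfolding staircase_det_def dilate_def by (rule det_rows_cong) (simp add: power_int_add q)
  also have "\<dots> = (\<Prod>i<n. q powi (int n - 2 * int i) * q powi int i) * staircase_det n g"
    unfolding staircase_det_def det_rows_scale by (simp only: prod.distrib)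
  also have "(\<Prod>i<n. q powi (int n - 2 * int i) * q powi int i) = (\<Prod>i<n. q ^ (n - i))"
  proof (rule prod.cong)
    fix i assume "i \<in> {..<n}"
    then have "int n - 2 * int i + int i = int (n - i)" by auto
    moreover have "q powi (int n - 2 * int i) * q powi int i = q powi (int n - 2 * int i + int i)"
      by (rule power_int_add[symmetric]) (simp add: q)
    ultimately show "q powi (int n - 2 * int i) * q powi int i = q ^ (n - i)"
      by (simp only: power_int_of_nat)
  qed simp
  also have "\<dots> = (\<Prod>i<n. q ^ Suc i)"
    using prod.nat_diff_reindex[of "\<lambda>i. q ^ Suc i" n] by (simp add: Suc_diff_Suc)
  finally show ?thesis .
qed

section \<open>The generating function of the polynomials p_k\<close>

definition fps_coeffs :: "'a::zero fps \<Rightarrow> int \<Rightarrow> 'a" where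
  "fps_coeffs F k = (if k < 0 then 0 else fps_nth F (nat k))"

definition fps_dilate :: "'a::comm_ring_1 \<Rightarrow> 'a fps \<Rightarrow> 'a fps" where
  "fps_dilate q F = Abs_fps (\<lambda>n. q ^ n * fps_nth F n)"

lemma fps_one_minus_X_mult_nth:
  fixes F :: "'a::comm_ring_1 fps"
  shows "fps_nth ((1 - fps_const c * fps_X) * F) n
      = (if n = 0 then fps_nth F 0 else fps_nth F n - c * fps_nth F (n - 1))"
proof -
  have "(1 - fps_const c * fps_X) * F = F - fps_const c * (fps_X * F)"
    by (simp only: left_diff_distrib mult.assoc mult.left_neutral)
  then show ?thesis
    by (simp add: fps_X_mult_nth)
qed

lemma fps_coeffs_mult_lin:
  fixes F :: "'a::comm_ring_1 fps"
  shows "fps_coeffs ((1 - fps_const c * fps_X) * F) = mult_lin c (fps_coeffs F)"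
proof (rule ext)
  fix k :: int
  consider "k \<le> 0" | "k > 0" by linarith
  then show "fps_coeffs ((1 - fps_const c * fps_X) * F) k = mult_lin c (fps_coeffs F) k"
  proof cases
    case 2
    then have "nat (k - 1) = nat k - 1" by simp
    with 2 show ?thesis by (simp add: fps_coeffs_def mult_lin_def fps_one_minus_X_mult_nth)
  qed (auto simp: fps_coeffs_def mult_lin_def fps_one_minus_X_mult_nth)
qed

lemma fps_coeffs_dilate:
  fixes F :: "'a::field fps"
  shows "fps_coeffs (fps_dilate q F) = dilate q (fps_coeffs F)"
proof (rule ext)
  fix k :: int
  show "fps_coeffs (fps_dilate q F) k = dilate q (fps_coeffs F) k"
  proof (cases "k < 0")
    case False
    then have "q powi k = q ^ nat k"
      by (metis nonneg_int_cases nat_int not_less power_int_of_nat)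
    with False show ?thesis
      by (simp add: fps_coeffs_def dilate_def fps_dilate_def)
  qed (simp add: fps_coeffs_def dilate_def)
qed

lemma fps_dilate_mult: "fps_dilate q (A * B) = fps_dilate q A * fps_dilate q B"
proof (rule fps_ext)
  fix n
  have "fps_nth (fps_dilate q (A * B)) n
      = (\<Sum>i = 0..n. (q ^ i * fps_nth A i) * (q ^ (n - i) * fps_nth B (n - i)))"
    unfolding fps_dilate_def fps_nth_Abs_fps fps_mult_nth sum_distrib_left
  proof (rule sum.cong)
    fix i assume "i \<in> {0..n}"
    then have "q ^ n = q ^ i * q ^ (n - i)"
      by (simp add: power_add[symmetric])
    then show "q ^ n * (fps_nth A i * fps_nth B (n - i))
        = q ^ i * fps_nth A i * (q ^ (n - i) * fps_nth B (n - i))"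
      by (simp add: algebra_simps)
  qed simp
  then show "fps_nth (fps_dilate q (A * B)) n = fps_nth (fps_dilate q A * fps_dilate q B) n"
    by (simp add: fps_dilate_def fps_mult_nth)
qed

text \<open>qexp_fps q x and qpoch_fps q expand 1 / ((1 - q) x t; q)_\<infinity> and (- (1 - q) t; q)_\<infinity>,
  so that pp_fps q y z is the generating function of the p_k(y, z).\<close>

definition qexp_fps :: "complex \<Rightarrow> complex \<Rightarrow> complex fps" where
  "qexp_fps q x = Abs_fps (\<lambda>a. ((1 - q) * x) ^ a / qpoch q a)"

definition qpoch_fps :: "complex \<Rightarrow> complex fps" where
  "qpoch_fps q = Abs_fps (\<lambda>c. (1 - q) ^ c * q ^ (c * (c - 1) div 2) / qpoch q c)"

definition pp_fps :: "complex \<Rightarrow> complex \<Rightarrow> complex \<Rightarrow> complex fps" where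
  "pp_fps q y z = qexp_fps q y * qexp_fps q z * qpoch_fps q"

lemma pp_eq_fps_coeffs: "pp q k y z = fps_coeffs (pp_fps q y z) k"
proof (cases "k < 0")
  case True
  then show ?thesis by (simp add: pp_def fps_coeffs_def)
next
  case False
  define n where "n = nat k"
  define U where "U x a = ((1 - q) * x) ^ a / qpoch q a" for x a
  define W where "W c = (1 - q) ^ c * q ^ (c * (c - 1) div 2) / qpoch q c" for c
  have "fps_coeffs (pp_fps q y z) k = (\<Sum>i = 0..n. (\<Sum>a = 0..i. U y a * U z (i - a)) * W (n - i))"
    using False by (simp add: fps_coeffs_def n_def pp_fps_def fps_mult_nth
        qexp_fps_def qpoch_fps_def U_def W_def)
  also have "\<dots> = (\<Sum>(i, a)\<in>Sigma {0..n} (\<lambda>i. {0..i}). U y a * U z (i - a) * W (n - i))"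
    by (simp add: sum_distrib_right sum.Sigma)
  also have "\<dots> = (\<Sum>(a, b)\<in>{(a, b). a + b \<le> n}. U y a * U z b * W (n - a - b))"
    by (rule sum.reindex_bij_witness[where i = "\<lambda>(a, b). (a + b, a)" and j = "\<lambda>(i, a). (a, i - a)"]) auto
  also have "\<dots> = (\<Sum>(a, b)\<in>{(a, b). a + b \<le> n}. (1 - q) ^ n * (let c = n - a - b in
      y ^ a * z ^ b * q ^ (c * (c - 1) div 2) / (qpoch q a * qpoch q b * qpoch q c)))"
  proof (rule sum.cong[OF refl], clarify)
    fix a b assume "a + b \<le> n"
    then have "(1 - q) ^ n = (1 - q) ^ a * (1 - q) ^ b * (1 - q) ^ (n - a - b)"
      by (simp add: power_add[symmetric])
    then show "U y a * U z b * W (n - a - b) = (1 - q) ^ n * (let c = n - a - b in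
        y ^ a * z ^ b * q ^ (c * (c - 1) div 2) / (qpoch q a * qpoch q b * qpoch q c))"
      by (simp add: U_def W_def Let_def power_mult_distrib mult_ac)
  qed
  also have "\<dots> = pp q k y z"
    using False by (simp add: pp_def n_def sum_distrib_left case_prod_unfold)
  finally show ?thesis ..
qed

lemma pp_neg: "k < 0 \<Longrightarrow> pp q k y z = 0"
  by (simp add: pp_def)

lemma pp_swap: "pp q k y z = pp q k z y"
  by (simp only: pp_eq_fps_coeffs pp_fps_def mult.commute[of "qexp_fps q y" "qexp_fps q z"])

lemma qpoch_Suc: "qpoch q (Suc m) = qpoch q m * (1 - q ^ Suc m)"
  unfolding qpoch_def by (simp add: prod.nat_ivl_Suc')

lemma qpoch_nonzero:
  assumes "\<forall>n::nat. n > 0 \<longrightarrow> q ^ n \<noteq> 1"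
  shows "qpoch q m \<noteq> 0"
  unfolding qpoch_def using assms by (auto simp: prod_zero_iff)

lemma fps_dilate_qexp_fps: "fps_dilate q (qexp_fps q x) = qexp_fps q (q * x)"
  by (rule fps_ext) (simp add: fps_dilate_def qexp_fps_def power_mult_distrib mult_ac)

lemma qexp_fps_mult_lin:
  assumes "\<forall>n::nat. n > 0 \<longrightarrow> q ^ n \<noteq> 1"
  shows "(1 - fps_const ((1 - q) * x) * fps_X) * qexp_fps q x = qexp_fps q (q * x)"
proof (rule fps_ext)
  fix n
  let ?U = "\<lambda>a. fps_nth (qexp_fps q x) a"
  show "fps_nth ((1 - fps_const ((1 - q) * x) * fps_X) * qexp_fps q x) n = fps_nth (qexp_fps q (q * x)) n"
  proof (cases n)
    case 0
    then show ?thesis by (simp add: fps_one_minus_X_mult_nth qexp_fps_def)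
  next
    case (Suc m)
    have "qpoch q m \<noteq> 0" "1 - q ^ Suc m \<noteq> 0"
      using qpoch_nonzero[OF assms] assms by auto
    then have rec: "(1 - q) * x * ?U m = (1 - q ^ Suc m) * ?U (Suc m)"
      by (simp add: qexp_fps_def qpoch_Suc field_simps)
    have "fps_nth ((1 - fps_const ((1 - q) * x) * fps_X) * qexp_fps q x) (Suc m)
        = ?U (Suc m) - (1 - q) * x * ?U m"
      by (simp add: fps_one_minus_X_mult_nth)
    also have "\<dots> = q ^ Suc m * ?U (Suc m)"
      unfolding rec by (simp add: algebra_simps)
    also have "\<dots> = fps_nth (qexp_fps q (q * x)) (Suc m)"
      by (simp add: qexp_fps_def power_mult_distrib mult_ac)
    finally show ?thesis
      using Suc by simp
  qed
qed

lemma qpoch_fps_rec: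
  assumes "\<forall>n::nat. n > 0 \<longrightarrow> q ^ n \<noteq> 1"
  shows "(1 - fps_const (q - 1) * fps_X) * fps_dilate q (qpoch_fps q) = qpoch_fps q"
proof (rule fps_ext)
  fix n
  let ?W = "\<lambda>c. fps_nth (qpoch_fps q) c"
  show "fps_nth ((1 - fps_const (q - 1) * fps_X) * fps_dilate q (qpoch_fps q)) n = fps_nth (qpoch_fps q) n"
  proof (cases n)
    case 0
    then show ?thesis by (simp add: fps_one_minus_X_mult_nth fps_dilate_def)
  next
    case (Suc m)
    have "qpoch q m \<noteq> 0" "1 - q ^ Suc m \<noteq> 0"
      using qpoch_nonzero[OF assms] assms by auto
    moreover have "Suc m * (Suc m - 1) div 2 = m * (m - 1) div 2 + m"
      by (cases m) (auto simp: algebra_simps)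
    ultimately have rec: "(1 - q) * q ^ m * ?W m = (1 - q ^ Suc m) * ?W (Suc m)"
      unfolding qpoch_fps_def fps_nth_Abs_fps by (simp add: qpoch_Suc power_add field_simps)
    have "fps_nth ((1 - fps_const (q - 1) * fps_X) * fps_dilate q (qpoch_fps q)) (Suc m)
        = q ^ Suc m * ?W (Suc m) + (1 - q) * q ^ m * ?W m"
      by (simp add: fps_one_minus_X_mult_nth fps_dilate_def algebra_simps)
    also have "\<dots> = ?W (Suc m)"
      unfolding rec by (simp add: algebra_simps)
    finally show ?thesis
      using Suc by simp
  qed
qed

section \<open>The identities for \<phi>_N\<close>

lemma phi_nat_eq_staircase_det: "phi_nat q n y z = staircase_det n (\<lambda>k. pp q k y z)"
proof (cases "n = 0")
  case True
  then show ?thesis by (simp add: phi_nat_def staircase_det_def det_rows_def)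
next
  case False
  then show ?thesis
    unfolding phi_nat_def staircase_det_def det_rows_def
    by (auto intro!: arg_cong[where f = det] cong_mat simp: algebra_simps)
qed

lemma phi_nat_swap: "phi_nat q n y z = phi_nat q n z y"
  unfolding phi_nat_eq_staircase_det by (simp only: pp_swap[of q _ y z])

lemma phi_nat_1:
  assumes "q \<noteq> 1"
  shows "phi_nat q (Suc 0) y z = 1 + y + z"
proof -
  have "staircase_det (Suc 0) g = g 1" for g :: "int \<Rightarrow> complex"
    unfolding staircase_det_def det_rows_def by (subst det_single) auto
  moreover have "fps_nth (qexp_fps q x) 0 = 1" "fps_nth (qexp_fps q x) (Suc 0) = x"
    "fps_nth (qpoch_fps q) 0 = 1" "fps_nth (qpoch_fps q) (Suc 0) = 1" for x
    using assms by (simp_all add: qexp_fps_def qpoch_fps_def qpoch_def)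
  ultimately show ?thesis
    by (simp add: phi_nat_eq_staircase_det pp_eq_fps_coeffs fps_coeffs_def pp_fps_def fps_mult_nth_1')
qed

lemma phi_nat_0 [simp]: "phi_nat q 0 y z = 1"
  by (simp add: phi_nat_def)

definition phi_sign :: "nat \<Rightarrow> complex" where
  "phi_sign n = (-1) ^ (n * (n + 1) div 2)"

lemma phi_eq_phi_nat: "N = int n \<Longrightarrow> phi q N y z = phi_nat q n y z"
  by (simp add: phi_def)

lemma phi_eq_phi_nat_reflected:
  assumes "N = - int n - 1"
  shows "phi q N y z = phi_sign n * phi_nat q n y z"
proof -
  have "(- int n - 1) * (- int n - 1 + 1) div 2 = int (n * (n + 1) div 2)"
  proof -
    have "(- int n - 1) * (- int n - 1 + 1) = int (n * (n + 1))"
      by (simp add: algebra_simps)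
    then show ?thesis by (simp add: zdiv_int)
  qed
  then show ?thesis
    unfolding assms by (simp add: phi_def phi_sign_def)
qed

lemma phi_sign_square: "phi_sign n * phi_sign n = 1"
  unfolding phi_sign_def by (simp add: power_mult_distrib[symmetric])

lemma phi_sign_Suc_Suc: "phi_sign n * phi_sign (Suc (Suc n)) = -1"
proof -
  have "Suc (Suc n) * (Suc (Suc n) + 1) = n * (n + 1) + 2 * (2 * n + 3)"
    by (simp add: algebra_simps)
  then have "Suc (Suc n) * (Suc (Suc n) + 1) div 2 = n * (n + 1) div 2 + (2 * n + 3)"
    by simp
  then have "n * (n + 1) div 2 + Suc (Suc n) * (Suc (Suc n) + 1) div 2
      = Suc (2 * (n * (n + 1) div 2 + n + 1))"
    by simp
  then have "phi_sign n * phi_sign (Suc (Suc n)) = (-1) ^ Suc (2 * (n * (n + 1) div 2 + n + 1))"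
    unfolding phi_sign_def power_add[symmetric] by (rule arg_cong)
  then show ?thesis by simp
qed

lemma phi_products_reflected:
  assumes "N = - int m - 2"
  shows "phi q (N + 1) a b * phi q (N - 1) c d = - (phi_nat q (Suc (Suc m)) c d * phi_nat q m a b)"
    and "phi q N a b * phi q N c d = phi_nat q (Suc m) a b * phi_nat q (Suc m) c d"
proof -
  have phis: "phi q (N + 1) a b = phi_sign m * phi_nat q m a b"
    "phi q N a b = phi_sign (Suc m) * phi_nat q (Suc m) a b"
    "phi q (N - 1) a b = phi_sign (Suc (Suc m)) * phi_nat q (Suc (Suc m)) a b" for a b
    by (rule phi_eq_phi_nat_reflected; simp add: assms)+
  have "phi q (N + 1) a b * phi q (N - 1) c d
      = (phi_sign m * phi_sign (Suc (Suc m))) * (phi_nat q (Suc (Suc m)) c d * phi_nat q m a b)"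
    "phi q N a b * phi q N c d
      = (phi_sign (Suc m) * phi_sign (Suc m)) * (phi_nat q (Suc m) a b * phi_nat q (Suc m) c d)"
    unfolding phis by (simp_all only: ac_simps)
  then show "phi q (N + 1) a b * phi q (N - 1) c d = - (phi_nat q (Suc (Suc m)) c d * phi_nat q m a b)"
    "phi q N a b * phi q N c d = phi_nat q (Suc m) a b * phi_nat q (Suc m) c d"
    unfolding phi_sign_Suc_Suc phi_sign_square by simp_all
qed

lemma power_int_reflected:
  fixes q :: "'a::field"
  assumes "N = - int m - 2"
  shows "q powi (2 * N) = 1 / (q ^ Suc m * q) ^ 2"
    and "q powi N = 1 / (q ^ Suc m * q)"
    and "q powi (2 * N + 1) = 1 / ((q ^ Suc m) ^ 2 * q)"
proof -
  have "2 * N = - int (Suc m + Suc m + 2)"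
    using assms by simp
  then show "q powi (2 * N) = 1 / (q ^ Suc m * q) ^ 2"
    by (simp only: power_int_minus_divide power_int_of_nat power_add) (simp add: power2_eq_square mult_ac)
  have "N = - int (Suc m + 1)"
    using assms by simp
  then show "q powi N = 1 / (q ^ Suc m * q)"
    by (simp only: power_int_minus_divide power_int_of_nat power_add) simp
  have "2 * N + 1 = - int (Suc m + Suc m + 1)"
    using assms by simp
  then show "q powi (2 * N + 1) = 1 / ((q ^ Suc m) ^ 2 * q)"
    by (simp only: power_int_minus_divide power_int_of_nat power_add) (simp add: power2_eq_square)
qed

lemma int_cases_reflected [case_names nonneg minus_one below]:
  fixes N :: int
  obtains (nonneg) n where "N = int n" | (minus_one) "N = -1" | (below) n where "N = - int n - 2"
proof (cases "N \<ge> 0")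
  case True
  then show ?thesis using nonneg[of "nat N"] by simp
next
  case False
  then show ?thesis using minus_one below[of "nat (- N - 2)"] by (cases "N = -1") simp_all
qed

lemma reflected_rel6_algebra:
  fixes q P y z X C Aq B :: "'a::field"
  assumes "q \<noteq> 0" "1 - q \<noteq> 0" "P \<noteq> 0"
    and rel4: "Aq - B = (1 - q) * (y / q) * X"
    and rel6: "P ^ 2 * y * X + P * (1 + z) * C = (1 - P ^ 2 * q) / (1 - q) * B"
  shows "1 / (P * q) ^ 2 * (y * X) + 1 / (P * q) * ((1 + z) * C) = (1 - 1 / (P ^ 2 * q)) / (1 - q) * - Aq"
proof -
  have Aq: "Aq = B + (1 - q) * (y / q) * X"
    using rel4 by (simp add: diff_eq_eq add.commute)
  have rel6': "(1 - q) * q * (P ^ 2 * y * X + P * (1 + z) * C) - q * (1 - P ^ 2 * q) * B = 0"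
    unfolding rel6 using assms(2) by (simp add: field_simps)
  \<comment> \<open>after eliminating Aq, the claim is rel6 multiplied by (1 - q) q\<close>
  have "1 / (P * q) ^ 2 * (y * X) + 1 / (P * q) * ((1 + z) * C) + (1 - 1 / (P ^ 2 * q)) / (1 - q) * Aq
      = ((1 - q) * q * (P ^ 2 * y * X + P * (1 + z) * C) - q * (1 - P ^ 2 * q) * B) / ((1 - q) * (P * q) ^ 2)"
    unfolding Aq using assms(1-3) by (simp add: field_simps power2_eq_square)
  also have "\<dots> = 0"
    unfolding rel6' by simp
  finally show ?thesis
    unfolding mult_minus_right by (rule eq_neg_iff_add_eq_0[THEN iffD2])
qed

context
  fixes q :: complex
  assumes q_nonzero: "q \<noteq> 0" and not_root_of_unity: "\<forall>n::nat. n > 0 \<longrightarrow> q ^ n \<noteq> 1"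
begin

lemma q_ne_1: "q \<noteq> 1"
  using not_root_of_unity[rule_format, of 1] by simp

lemma one_minus_q: "1 - q \<noteq> 0"
  using q_ne_1 by simp

lemma pp_mult_lin_y: "mult_lin ((1 - q) * y) (\<lambda>k. pp q k y z) = (\<lambda>k. pp q k (q * y) z)"
proof -
  have "(1 - fps_const ((1 - q) * y) * fps_X) * pp_fps q y z = pp_fps q (q * y) z"
    unfolding pp_fps_def qexp_fps_mult_lin[OF not_root_of_unity, of y, symmetric] by (simp add: ac_simps)
  then show ?thesis
    by (simp add: pp_eq_fps_coeffs fps_coeffs_mult_lin[symmetric])
qed

lemma pp_mult_lin_z: "mult_lin ((1 - q) * z) (\<lambda>k. pp q k y z) = (\<lambda>k. pp q k y (q * z))"
  using pp_mult_lin_y[of z y] by (simp only: pp_swap[of q _ y])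

lemma pp_mult_lin_dilate: "mult_lin (q - 1) (dilate q (\<lambda>k. pp q k y z)) = (\<lambda>k. pp q k (q * y) (q * z))"
proof -
  have "(1 - fps_const (q - 1) * fps_X) * fps_dilate q (pp_fps q y z)
      = qexp_fps q (q * y) * qexp_fps q (q * z)
          * ((1 - fps_const (q - 1) * fps_X) * fps_dilate q (qpoch_fps q))"
    by (simp add: pp_fps_def fps_dilate_mult fps_dilate_qexp_fps ac_simps)
  also have "\<dots> = pp_fps q (q * y) (q * z)"
    by (simp add: qpoch_fps_rec[OF not_root_of_unity] pp_fps_def)
  finally show ?thesis
    by (simp add: pp_eq_fps_coeffs fps_coeffs_dilate[symmetric] fps_coeffs_mult_lin[symmetric])
qed

lemma pp_dilate_shifts:
  "mult_lin (q - 1) (dilate q (\<lambda>k. pp q k (y / q) (z / q))) = (\<lambda>k. pp q k y z)"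
  "mult_lin ((1 - q) * z) (dilate q (\<lambda>k. pp q k (y / q) (z / q))) = dilate q (\<lambda>k. pp q k (y / q) z)"
proof -
  show "mult_lin (q - 1) (dilate q (\<lambda>k. pp q k (y / q) (z / q))) = (\<lambda>k. pp q k y z)"
    using pp_mult_lin_dilate[of "y / q" "z / q"] q_nonzero by simp
  have "(1 - q) * z = q * ((1 - q) * (z / q))"
    using q_nonzero by simp
  then show "mult_lin ((1 - q) * z) (dilate q (\<lambda>k. pp q k (y / q) (z / q))) = dilate q (\<lambda>k. pp q k (y / q) z)"
    using mult_lin_dilate[OF q_nonzero, of "(1 - q) * (z / q)"] pp_mult_lin_z[of "z / q" "y / q"] q_nonzero
    by simp
qed

lemma dilate_pp_neg: "k < 0 \<Longrightarrow> dilate q (\<lambda>k. pp q k y z) k = 0"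
  by (simp add: dilate_def pp_neg)

lemma phi_nat_rel1:
  "y * phi_nat q (Suc n) (y / q) z * phi_nat q n y (z / q)
      - z * phi_nat q (Suc n) y (z / q) * phi_nat q n (y / q) z
    = (y - z) * phi_nat q (Suc n) (y / q) (z / q) * phi_nat q n y z"
proof -
  define c where "c = (1 - q) / q"
  have "c \<noteq> 0"
    using q_nonzero q_ne_1 by (simp add: c_def)
  have shift_y: "mult_lin (c * y) (\<lambda>k. pp q k (y / q) w) = (\<lambda>k. pp q k y w)" for w
    using pp_mult_lin_y[of "y / q" w] q_nonzero by (simp add: c_def)
  have shift_z: "mult_lin (c * z) (\<lambda>k. pp q k w (z / q)) = (\<lambda>k. pp q k w z)" for w
    using pp_mult_lin_z[of "z / q" w] q_nonzero by (simp add: c_def)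
  have "c * (y * phi_nat q (Suc n) (y / q) z * phi_nat q n y (z / q)
      - z * phi_nat q (Suc n) y (z / q) * phi_nat q n (y / q) z)
      = c * ((y - z) * phi_nat q (Suc n) (y / q) (z / q) * phi_nat q n y z)"
    using staircase_det_relation_1[where a = "c * y" and b = "c * z" and n = n
        and g = "\<lambda>k. pp q k (y / q) (z / q)"]
    unfolding shift_y shift_z phi_nat_eq_staircase_det by (simp add: algebra_simps)
  then show ?thesis
    using \<open>c \<noteq> 0\<close> by simp
qed

lemma phi_nat_rel2:
  "y * phi_nat q (Suc n) y (z / q) * phi_nat q n (y / q) z
      - z * phi_nat q (Suc n) (y / q) z * phi_nat q n y (z / q)
    = (y - z) * phi_nat q (Suc n) y z * phi_nat q n (y / q) (z / q)"
proof -
  define c where "c = (1 - q) / q"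
  have "c \<noteq> 0"
    using q_nonzero q_ne_1 by (simp add: c_def)
  have shift_y: "mult_lin (c * y) (\<lambda>k. pp q k (y / q) w) = (\<lambda>k. pp q k y w)" for w
    using pp_mult_lin_y[of "y / q" w] q_nonzero by (simp add: c_def)
  have shift_z: "mult_lin (c * z) (\<lambda>k. pp q k w (z / q)) = (\<lambda>k. pp q k w z)" for w
    using pp_mult_lin_z[of "z / q" w] q_nonzero by (simp add: c_def)
  have "c * (y * phi_nat q (Suc n) y (z / q) * phi_nat q n (y / q) z
      - z * phi_nat q (Suc n) (y / q) z * phi_nat q n y (z / q))
      = c * ((y - z) * phi_nat q (Suc n) y z * phi_nat q n (y / q) (z / q))"
    using staircase_det_relation_2[where g = "\<lambda>k. pp q k (y / q) (z / q)"
        and a = "c * y" and b = "c * z" and n = n, OF pp_neg]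
    unfolding shift_y shift_z phi_nat_eq_staircase_det by (simp add: algebra_simps)
  then show ?thesis
    using \<open>c \<noteq> 0\<close> by simp
qed

lemma phi_nat_rel3:
  "z * phi_nat q (Suc n) y z * phi_nat q n (y / q) z
      + q ^ Suc n * phi_nat q (Suc n) (y / q) z * phi_nat q n y z
    = q ^ Suc n * (1 + z) * phi_nat q (Suc n) (y / q) (z / q) * phi_nat q n y (q * z)"
proof -
  define Q where "Q = (\<Prod>i<n. q ^ Suc i)"
  have "(1 - q) * Q \<noteq> 0"
    using q_nonzero q_ne_1 by (simp add: Q_def)
  moreover have "(1 - q) * Q * (z * phi_nat q (Suc n) y z * phi_nat q n (y / q) z
        + q ^ Suc n * phi_nat q (Suc n) (y / q) z * phi_nat q n y z)
      = (1 - q) * Q * (q ^ Suc n * (1 + z) * phi_nat q (Suc n) (y / q) (z / q) * phi_nat q n y (q * z))"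
    using staircase_det_relation_1[where a = "(1 - q) * z" and b = "q - 1" and n = n
        and g = "dilate q (\<lambda>k. pp q k (y / q) (z / q))"]
    unfolding pp_dilate_shifts pp_mult_lin_z staircase_det_dilate[OF q_nonzero] phi_nat_eq_staircase_det
    by (simp add: Q_def algebra_simps)
  ultimately show ?thesis
    by simp
qed

lemma phi_nat_rel3_dual:
  "q ^ Suc n * z * phi_nat q (Suc n) (y / q) z * phi_nat q n y z
      + phi_nat q (Suc n) y z * phi_nat q n (y / q) z
    = (1 + z) * phi_nat q (Suc n) y (q * z) * phi_nat q n (y / q) (z / q)"
proof -
  define Q where "Q = (\<Prod>i<n. q ^ Suc i)"
  have "(1 - q) * Q \<noteq> 0"
    using q_nonzero q_ne_1 by (simp add: Q_def)
  moreover have "(1 - q) * Q * (q ^ Suc n * z * phi_nat q (Suc n) (y / q) z * phi_nat q n y z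
        + phi_nat q (Suc n) y z * phi_nat q n (y / q) z)
      = (1 - q) * Q * ((1 + z) * phi_nat q (Suc n) y (q * z) * phi_nat q n (y / q) (z / q))"
    using staircase_det_relation_2[where g = "dilate q (\<lambda>k. pp q k (y / q) (z / q))" and a = "(1 - q) * z"
        and b = "q - 1" and n = n, OF dilate_pp_neg]
    unfolding pp_dilate_shifts pp_mult_lin_z staircase_det_dilate[OF q_nonzero] phi_nat_eq_staircase_det
    by (simp add: Q_def algebra_simps)
  ultimately show ?thesis
    by simp
qed

lemma phi_nat_rel4:
  "phi_nat q (Suc (Suc m)) (y / q) z * phi_nat q m y z - phi_nat q (Suc (Suc m)) y z * phi_nat q m (y / q) z
    = (1 - q) * (y / q) * phi_nat q (Suc m) (y / q) z * phi_nat q (Suc m) y z"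
proof -
  have shift: "mult_lin ((1 - q) * (y / q)) (\<lambda>k. pp q k (y / q) z) = (\<lambda>k. pp q k y z)"
    using pp_mult_lin_y[of "y / q" z] q_nonzero by simp
  show ?thesis
    using staircase_det_relation_3[where g = "\<lambda>k. pp q k (y / q) z" and b = 0 and n = m
        and a = "(1 - q) * (y / q)",
        OF pp_neg]
    unfolding shift mult_lin_0 phi_nat_eq_staircase_det by (simp add: algebra_simps)
qed

lemma phi_nat_rel6:
  "q ^ (2 * Suc m) * y * phi_nat q (Suc m) (y / q) z * phi_nat q (Suc m) y z
      + q ^ Suc m * (1 + z) * phi_nat q (Suc m) y (q * z) * phi_nat q (Suc m) (y / q) (z / q)
    = (1 - q ^ (2 * Suc m + 1)) / (1 - q) * phi_nat q (Suc (Suc m)) y z * phi_nat q m (y / q) z"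
proof -
  define Aq where "Aq = phi_nat q (Suc (Suc m)) (y / q) z * phi_nat q m y z"
  define B where "B = phi_nat q (Suc (Suc m)) y z * phi_nat q m (y / q) z"
  define X where "X = phi_nat q (Suc m) (y / q) z * phi_nat q (Suc m) y z"
  define C where "C = phi_nat q (Suc m) y (q * z) * phi_nat q (Suc m) (y / q) (z / q)"
  define Q where "Q = (\<Prod>i<m. q ^ Suc i)"
  have "Q \<noteq> 0"
    using q_nonzero by (simp add: Q_def)
  moreover have "Q * (B - q ^ Suc m * q ^ Suc (Suc m) * Aq) = Q * ((1 - q) * (1 + z) * q ^ Suc m * C)"
    using staircase_det_relation_3[where g = "dilate q (\<lambda>k. pp q k (y / q) (z / q))" and b = "q - 1"
        and n = m and a = "(1 - q) * z", OF dilate_pp_neg]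
    unfolding pp_dilate_shifts pp_mult_lin_z staircase_det_dilate[OF q_nonzero]
    by (simp add: Q_def Aq_def B_def C_def phi_nat_eq_staircase_det algebra_simps)
  ultimately have rel6: "B - q ^ Suc m * q ^ Suc (Suc m) * Aq = (1 - q) * (1 + z) * q ^ Suc m * C"
    by simp
  have rel4: "(1 - q) * y * X = q * (Aq - B)"
    using phi_nat_rel4[where m = m and y = y and z = z] q_nonzero
        by (simp add: Aq_def B_def X_def field_simps)
  have "q ^ (2 * Suc m + 1) = q ^ (Suc m + Suc (Suc m))"
    by (rule arg_cong[where f = "power q"]) simp
  then have powers: "q ^ (2 * Suc m) * q = q ^ Suc m * q ^ Suc (Suc m)"
    "q ^ (2 * Suc m + 1) = q ^ Suc m * q ^ Suc (Suc m)"
    by (simp_all only: power_add power_one_right)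
  have "(1 - q) * (q ^ (2 * Suc m) * y * X + q ^ Suc m * (1 + z) * C)
      = q ^ (2 * Suc m) * ((1 - q) * y * X) + (1 - q) * (1 + z) * q ^ Suc m * C"
    by (simp add: algebra_simps)
  also have "\<dots> = (1 - q ^ (2 * Suc m + 1)) * B"
    unfolding rel4 rel6[symmetric] powers(2) mult.assoc[symmetric] powers(1) by (simp add: algebra_simps)
  finally show ?thesis
    using q_ne_1 by (simp add: X_def C_def B_def field_simps)
qed

lemma phi_rel1:
  "y * phi q (N + 1) (y / q) z * phi q N y (z / q) - z * phi q (N + 1) y (z / q) * phi q N (y / q) z
    = (y - z) * phi q (N + 1) (y / q) (z / q) * phi q N y z"
proof (cases N rule: int_cases_reflected)
  case (nonneg n)
  have "phi q (N + 1) a b = phi_nat q (Suc n) a b" "phi q N a b = phi_nat q n a b" for a b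
    by (rule phi_eq_phi_nat; simp add: nonneg)+
  then show ?thesis
    using phi_nat_rel1[where n = n and y = y and z = z] by simp
next
  case minus_one
  have "phi q (N + 1) a b = phi_nat q 0 a b" "phi q N a b = phi_sign 0 * phi_nat q 0 a b" for a b
    by (rule phi_eq_phi_nat phi_eq_phi_nat_reflected; simp add: minus_one)+
  then show ?thesis
    by (simp add: phi_sign_def algebra_simps)
next
  case (below m)
  have "phi q (N + 1) a b = phi_sign m * phi_nat q m a b"
    "phi q N a b = phi_sign (Suc m) * phi_nat q (Suc m) a b" for a b
    by (rule phi_eq_phi_nat_reflected; simp add: below)+
  moreover have "phi_sign m * phi_sign (Suc m) * (y * phi_nat q (Suc m) y (z / q) * phi_nat q m (y / q) z
      - z * phi_nat q (Suc m) (y / q) z * phi_nat q m y (z / q))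
    = phi_sign m * phi_sign (Suc m) * ((y - z) * phi_nat q (Suc m) y z * phi_nat q m (y / q) (z / q))"
    by (simp only: phi_nat_rel2)
  ultimately show ?thesis
    by (simp add: algebra_simps)
qed

lemma phi_rel2:
  "y * phi q (N + 1) y (z / q) * phi q N (y / q) z - z * phi q (N + 1) (y / q) z * phi q N y (z / q)
    = (y - z) * phi q (N + 1) y z * phi q N (y / q) (z / q)"
proof (cases N rule: int_cases_reflected)
  case (nonneg n)
  have "phi q (N + 1) a b = phi_nat q (Suc n) a b" "phi q N a b = phi_nat q n a b" for a b
    by (rule phi_eq_phi_nat; simp add: nonneg)+
  then show ?thesis
    using phi_nat_rel2[where n = n and y = y and z = z] by simp
next
  case minus_one
  have "phi q (N + 1) a b = phi_nat q 0 a b" "phi q N a b = phi_sign 0 * phi_nat q 0 a b" for a b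
    by (rule phi_eq_phi_nat phi_eq_phi_nat_reflected; simp add: minus_one)+
  then show ?thesis
    by (simp add: phi_sign_def algebra_simps)
next
  case (below m)
  have "phi q (N + 1) a b = phi_sign m * phi_nat q m a b"
    "phi q N a b = phi_sign (Suc m) * phi_nat q (Suc m) a b" for a b
    by (rule phi_eq_phi_nat_reflected; simp add: below)+
  moreover have "phi_sign m * phi_sign (Suc m) * (y * phi_nat q (Suc m) (y / q) z * phi_nat q m y (z / q)
      - z * phi_nat q (Suc m) y (z / q) * phi_nat q m (y / q) z)
    = phi_sign m * phi_sign (Suc m) * ((y - z) * phi_nat q (Suc m) (y / q) (z / q) * phi_nat q m y z)"
    by (simp only: phi_nat_rel1)
  ultimately show ?thesis
    by (simp add: algebra_simps)
qed

lemma phi_rel3: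
  "q powi (- N - 1) * z * phi q (N + 1) y z * phi q N (y / q) z + phi q (N + 1) (y / q) z * phi q N y z
    = (1 + z) * phi q (N + 1) (y / q) (z / q) * phi q N y (q * z)"
proof (cases N rule: int_cases_reflected)
  case (nonneg n)
  have phis: "phi q (N + 1) a b = phi_nat q (Suc n) a b" "phi q N a b = phi_nat q n a b" for a b
    by (rule phi_eq_phi_nat; simp add: nonneg)+
  have power: "q powi (- N - 1) = 1 / q ^ Suc n"
  proof -
    have "- N - 1 = - int (Suc n)" using nonneg by simp
    then show ?thesis by (simp only: power_int_minus_divide power_int_of_nat)
  qed
  have "q ^ Suc n \<noteq> 0"
    using q_nonzero by simp
  then show ?thesis
    unfolding phis power using phi_nat_rel3[where n = n and y = y and z = z] by (simp add: field_simps)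
next
  case minus_one
  have "phi q (N + 1) a b = phi_nat q 0 a b" "phi q N a b = phi_sign 0 * phi_nat q 0 a b" for a b
    by (rule phi_eq_phi_nat phi_eq_phi_nat_reflected; simp add: minus_one)+
  then show ?thesis
    by (simp add: minus_one phi_sign_def algebra_simps)
next
  case (below m)
  have "phi q (N + 1) a b = phi_sign m * phi_nat q m a b"
    "phi q N a b = phi_sign (Suc m) * phi_nat q (Suc m) a b" for a b
    by (rule phi_eq_phi_nat_reflected; simp add: below)+
  moreover have "q powi (- N - 1) = q ^ Suc m"
  proof -
    have "- N - 1 = int (Suc m)" using below by simp
    then show ?thesis by (simp only: power_int_of_nat)
  qed
  moreover have "phi_sign m * phi_sign (Suc m)
      * (q ^ Suc m * z * phi_nat q (Suc m) (y / q) z * phi_nat q m y z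
      + phi_nat q (Suc m) y z * phi_nat q m (y / q) z)
    = phi_sign m * phi_sign (Suc m) * ((1 + z) * phi_nat q (Suc m) y (q * z) * phi_nat q m (y / q) (z / q))"
    by (simp only: phi_nat_rel3_dual)
  ultimately show ?thesis
    by (simp add: algebra_simps)
qed

lemma phi_rel4:
  "phi q (N + 1) (y / q) z * phi q (N - 1) y z - phi q (N + 1) y z * phi q (N - 1) (y / q) z
    = (1 - q) * (y / q) * phi q N (y / q) z * phi q N y z"
proof (cases N rule: int_cases_reflected)
  case (nonneg n)
  show ?thesis
  proof (cases n)
    case 0
    have "phi q (N + 1) a b = phi_nat q 1 a b" "phi q N a b = phi_nat q 0 a b"
      "phi q (N - 1) a b = phi_sign 0 * phi_nat q 0 a b" for a b
      by (rule phi_eq_phi_nat phi_eq_phi_nat_reflected; simp add: nonneg 0)+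
    then show ?thesis
      using q_nonzero by (simp add: phi_nat_1[OF q_ne_1] phi_sign_def field_simps)
  next
    case (Suc m)
    have "phi q (N + 1) a b = phi_nat q (Suc (Suc m)) a b" "phi q N a b = phi_nat q (Suc m) a b"
      "phi q (N - 1) a b = phi_nat q m a b" for a b
      by (rule phi_eq_phi_nat; simp add: nonneg Suc)+
    then show ?thesis
      using phi_nat_rel4[where m = m and y = y and z = z] by simp
  qed
next
  case minus_one
  have phis: "phi q (N + 1) a b = phi_nat q 0 a b" "phi q N a b = phi_sign 0 * phi_nat q 0 a b"
    "phi q (N - 1) a b = phi_sign 1 * phi_nat q 1 a b" for a b
    by (rule phi_eq_phi_nat phi_eq_phi_nat_reflected; simp add: minus_one)+
  show ?thesis
    unfolding phis using q_nonzero by (simp add: phi_nat_1[OF q_ne_1] phi_sign_def field_simps)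
next
  case (below m)
  show ?thesis
    unfolding mult.assoc phi_products_reflected[OF below]
    using phi_nat_rel4[where m = m and y = y and z = z] by (simp add: mult.assoc[symmetric])
qed

lemma phi_rel5:
  "phi q (N + 1) y (z / q) * phi q (N - 1) y z - phi q (N + 1) y z * phi q (N - 1) y (z / q)
    = (1 - q) * (z / q) * phi q N y (z / q) * phi q N y z"
proof -
  have "phi q M a b = phi q M b a" for M a b
    by (simp add: phi_def phi_nat_swap[of q _ a b])
  then show ?thesis
    using phi_rel4[of N z y] by simp
qed

lemma phi_rel6_reflected:
  assumes "N = - int m - 2"
  shows "q powi (2 * N) * y * phi q N (y / q) z * phi q N y z
      + q powi N * (1 + z) * phi q N y (q * z) * phi q N (y / q) (z / q)
    = (1 - q powi (2 * N + 1)) / (1 - q) * phi q (N + 1) y z * phi q (N - 1) (y / q) z"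
proof -
  have "q ^ Suc m \<noteq> 0"
    using q_nonzero by simp
  have "q ^ (2 * Suc m) = (q ^ Suc m) ^ 2"
    unfolding power_mult[symmetric] by (simp add: mult.commute)
  then have powers: "q ^ (2 * Suc m) = (q ^ Suc m) ^ 2" "q ^ (2 * Suc m + 1) = (q ^ Suc m) ^ 2 * q"
    by (simp_all only: power_add power_one_right)
  have "1 / (q ^ Suc m * q) ^ 2 * (y * (phi_nat q (Suc m) (y / q) z * phi_nat q (Suc m) y z))
      + 1 / (q ^ Suc m * q) * ((1 + z) * (phi_nat q (Suc m) y (q * z) * phi_nat q (Suc m) (y / q) (z / q)))
    = (1 - 1 / ((q ^ Suc m) ^ 2 * q)) / (1 - q) * - (phi_nat q (Suc (Suc m)) (y / q) z * phi_nat q m y z)"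
  proof (rule reflected_rel6_algebra[OF q_nonzero one_minus_q \<open>q ^ Suc m \<noteq> 0\<close>])
    show "phi_nat q (Suc (Suc m)) (y / q) z * phi_nat q m y z
        - phi_nat q (Suc (Suc m)) y z * phi_nat q m (y / q) z
        = (1 - q) * (y / q) * (phi_nat q (Suc m) (y / q) z * phi_nat q (Suc m) y z)"
      using phi_nat_rel4[where m = m and y = y and z = z] by (simp only: mult.assoc)
    show "(q ^ Suc m) ^ 2 * y * (phi_nat q (Suc m) (y / q) z * phi_nat q (Suc m) y z)
        + q ^ Suc m * (1 + z) * (phi_nat q (Suc m) y (q * z) * phi_nat q (Suc m) (y / q) (z / q))
        = (1 - (q ^ Suc m) ^ 2 * q) / (1 - q) * (phi_nat q (Suc (Suc m)) y z * phi_nat q m (y / q) z)"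
      using phi_nat_rel6[where m = m and y = y and z = z] unfolding powers by (simp only: mult.assoc)
  qed
  then show ?thesis
    unfolding power_int_reflected[OF assms] mult.assoc phi_products_reflected[OF assms] by simp
qed

lemma phi_rel6:
  "q powi (2 * N) * y * phi q N (y / q) z * phi q N y z
      + q powi N * (1 + z) * phi q N y (q * z) * phi q N (y / q) (z / q)
    = (1 - q powi (2 * N + 1)) / (1 - q) * phi q (N + 1) y z * phi q (N - 1) (y / q) z"
proof (cases N rule: int_cases_reflected)
  case (nonneg n)
  show ?thesis
  proof (cases n)
    case 0
    have "phi q (N + 1) a b = phi_nat q 1 a b" "phi q N a b = phi_nat q 0 a b"
      "phi q (N - 1) a b = phi_sign 0 * phi_nat q 0 a b" for a b
      by (rule phi_eq_phi_nat phi_eq_phi_nat_reflected; simp add: nonneg 0)+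
    then show ?thesis
      using one_minus_q by (simp add: nonneg 0 phi_nat_1[OF q_ne_1] phi_sign_def field_simps)
  next
    case (Suc m)
    have "phi q (N + 1) a b = phi_nat q (Suc (Suc m)) a b" "phi q N a b = phi_nat q (Suc m) a b"
      "phi q (N - 1) a b = phi_nat q m a b" for a b
      by (rule phi_eq_phi_nat; simp add: nonneg Suc)+
    moreover have "q powi (2 * N) = q ^ (2 * Suc m)" "q powi N = q ^ Suc m"
      "q powi (2 * N + 1) = q ^ (2 * Suc m + 1)"
    proof -
      have "2 * N = int (2 * Suc m)" "N = int (Suc m)" "2 * N + 1 = int (2 * Suc m + 1)"
        using nonneg Suc by simp_all
      then show "q powi (2 * N) = q ^ (2 * Suc m)" "q powi N = q ^ Suc m"
        "q powi (2 * N + 1) = q ^ (2 * Suc m + 1)"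
        by (simp_all only: power_int_of_nat)
    qed
    ultimately show ?thesis
      using phi_nat_rel6[where m = m and y = y and z = z] by simp
  qed
next
  case minus_one
  have phis: "phi q (N + 1) a b = phi_nat q 0 a b" "phi q N a b = phi_sign 0 * phi_nat q 0 a b"
    "phi q (N - 1) a b = phi_sign 1 * phi_nat q 1 a b" for a b
    by (rule phi_eq_phi_nat phi_eq_phi_nat_reflected; simp add: minus_one)+
  have powers: "q powi (2 * N) = 1 / q ^ 2" "q powi N = 1 / q" "q powi (2 * N + 1) = 1 / q"
    by (simp_all add: minus_one power_int_minus_divide)
  show ?thesis
    unfolding phis powers using q_nonzero one_minus_q
    by (simp add: phi_nat_1[OF q_ne_1] phi_sign_def field_simps power2_eq_square)
next
  case (below m)
  then show ?thesis
    by (rule phi_rel6_reflected)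
qed

end

theorem proposition3:
  fixes q :: complex and N :: int and y z :: complex
  assumes "q \<noteq> 0" and "\<forall>n::nat. n > 0 \<longrightarrow> q ^ n \<noteq> 1"
  shows
  "(y * phi q (N+1) (y/q) z * phi q N y (z/q) - z * phi q (N+1) y (z/q) * phi q N (y/q) z
     = (y - z) * phi q (N+1) (y/q) (z/q) * phi q N y z) \<and>
   (y * phi q (N+1) y (z/q) * phi q N (y/q) z - z * phi q (N+1) (y/q) z * phi q N y (z/q)
     = (y - z) * phi q (N+1) y z * phi q N (y/q) (z/q)) \<and>
   (q powi (-N-1) * z * phi q (N+1) y z * phi q N (y/q) z + phi q (N+1) (y/q) z * phi q N y z
     = (1 + z) * phi q (N+1) (y/q) (z/q) * phi q N y (q*z)) \<and>
   (phi q (N+1) (y/q) z * phi q (N-1) y z - phi q (N+1) y z * phi q (N-1) (y/q) z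
     = (1 - q) * (y/q) * phi q N (y/q) z * phi q N y z) \<and>
   (phi q (N+1) y (z/q) * phi q (N-1) y z - phi q (N+1) y z * phi q (N-1) y (z/q)
     = (1 - q) * (z/q) * phi q N y (z/q) * phi q N y z) \<and>
   (q powi (2*N) * y * phi q N (y/q) z * phi q N y z
     + q powi N * (1 + z) * phi q N y (q*z) * phi q N (y/q) (z/q)
     = (1 - q powi (2*N+1)) / (1 - q) * phi q (N+1) y z * phi q (N-1) (y/q) z)"
  using phi_rel1[OF assms] phi_rel2[OF assms] phi_rel3[OF assms] phi_rel4[OF assms]
    phi_rel5[OF assms] phi_rel6[OF assms]
  by blast

end
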